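(* Let $\bm{H}$ be a random matrix with values in $\mathbb{C}^{N_R\times N_T}$, let $\lambda_{\max}$ be the maximum eigenvalue of $\bm{H}\bm{H}^\ast$, let $p$ be a nonnegative random variable (random transmit power), let $a,b>0$ and $c=a\log_2(1+bp\lambda_{\max})$. Then: (1) The following are equivalent: $\overline{F}_c(x)=O(e^{-\theta x})$ for some $\theta>0$; $\overline{F}_{p\lambda_{\max}}(x)=O(x^{-\theta})$ for some $\theta>0$; $\overline{F}_{p\operatorname{Tr}[\bm{H}\bm{H}^\ast]}(x)=O(x^{-\theta})$ for some $\theta>0$. (2) The following are equivalent: $\mathbb{E}[(1+bp\lambda_{\max})^\theta]<\infty$ for some $\theta>0$ (i.e. $\mathbb{E}[e^{\theta' c}]<\infty$ for some $\theta'>0$); $\mathbb{E}[(1+p\lambda_{\max})^\theta]<\infty$ for some $\theta>0$; $\mathbb{E}[(p\lambda_{\max})^\theta]<\infty$ for some $\theta>0$. In addition, if $p$ and $\lambda_{\max}$ are independent, then $\mathbb{E}[(p\lambda_{\max})^\theta]=\mathbb{E}[p^\theta]\,\mathbb{E}[\lambda_{\max}^\theta]$, and in that case $\mathbb{E}[p]<\infty$ together with $\mathbb{E}[\lambda_{\max}]<\infty$ suffices for these conditions.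
   Context: $\overline{F}_Y(x)=\Pr(Y>x)$; $f(x)=O(g(x))$ means $\limsup_{x\to\infty}f(x)/g(x)<\infty$. In the paper, $c$ is an upper bound on the capacity of a flat MIMO channel with random transmit power. *)

theory Defs
  imports "HOL-Probability.Probability" "HOL-Library.Landau_Symbols"
begin

definition conj_transpose :: "complex^'n^'m \<Rightarrow> complex^'m^'n" where
  "conj_transpose A = (\<chi> i j. cnj (A $ j $ i))"

definition mat_trace :: "complex^'n^'n \<Rightarrow> complex" where
  "mat_trace A = (\<Sum>i\<in>UNIV. A $ i $ i)"

definition real_eigenvalues :: "complex^'n^'n \<Rightarrow> real set" where
  "real_eigenvalues A = {x. \<exists>v. v \<noteq> 0 \<and> A *v v = complex_of_real x *s v}"

text \<open>Maximum eigenvalue of H H^* (which is Hermitian, so all eigenvalues are real).\<close>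
definition lambda_max :: "complex^'nt^'nr \<Rightarrow> real" where
  "lambda_max H = Max (real_eigenvalues (H ** conj_transpose H))"

definition tail :: "'a measure \<Rightarrow> ('a \<Rightarrow> real) \<Rightarrow> real \<Rightarrow> real" where
  "tail M Y x = measure M {\<omega> \<in> space M. Y \<omega> > x}"

end

(* Since lambda_max (H H^* ) is the maximum of |H^* v|^2 over unit vectors v, it lies between
   |H|^2 / N_R and |H|^2 = Tr (H H^* ) (Frobenius norm), so p lambda_max and p Tr (H H^* ) bound each
   other up to constants and have polynomial tails together. The bound c is an increasing function
   of X = p lambda_max with Pr (c > x) = Pr (X > (2 powr (x / a) - 1) / b), which trades polynomial
   decay of one tail for exponential decay of the other, and exp (t c) = (1 + b X) powr (t a / ln 2).
   The moments of 1 + b X, 1 + X and X control each other by pointwise comparison, using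
   (1 + X) powr t <= 2 powr t (1 + X powr t) and integrability of constants. *)

theory Submission
  imports Defs "HOL-Real_Asymp.Real_Asymp"
begin

lemma inner_vec_complex: "inner (x::complex^'n) y = Re (\<Sum>i\<in>UNIV. cnj (x$i) * y$i)"
  by (simp add: inner_vec_def inner_complex_def)

lemma inner_conj_transpose_mult:
  fixes H :: "complex^'n^'m"
  shows "inner (conj_transpose H *v x) y = inner x (H *v y)"
proof -
  have "(\<Sum>j\<in>UNIV. cnj ((conj_transpose H *v x)$j) * y$j)
      = (\<Sum>j\<in>UNIV. \<Sum>i\<in>UNIV. H$i$j * cnj (x$i) * y$j)"
    by (simp add: matrix_vector_mult_def conj_transpose_def sum_distrib_left sum_distrib_right mult.commute mult.left_commute)
  also have "\<dots> = (\<Sum>i\<in>UNIV. cnj (x$i) * (H *v y)$i)"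
    by (subst sum.swap) (simp add: matrix_vector_mult_def sum_distrib_left mult.commute mult.left_commute)
  finally show ?thesis by (simp add: inner_vec_complex)
qed

lemma matrix_vector_mult_scaleR: "(A::complex^'n^'m) *v (c *\<^sub>R x) = c *\<^sub>R (A *v x)"
  by (simp add: vec_eq_iff matrix_vector_mult_def scaleR_sum_right)

lemma real_eigenvalues_iff:
  "x \<in> real_eigenvalues A \<longleftrightarrow> (\<exists>v. v \<noteq> 0 \<and> A *v v = x *\<^sub>R v)"
proof -
  have scale: "complex_of_real x *s v = x *\<^sub>R v" for v :: "complex^'n"
    by (simp add: vec_eq_iff) (simp add: scaleR_conv_of_real)
  show ?thesis unfolding real_eigenvalues_def mem_Collect_eq scale ..
qed

lemma finite_real_eigenvalues_selfadjoint:
  fixes A :: "complex^'n^'n"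
  assumes selfadjoint: "\<And>x y. inner (A *v x) y = inner x (A *v y)"
  shows "finite (real_eigenvalues A)"
proof -
  define E where "E = real_eigenvalues A"
  define ev where "ev x = (SOME v. v \<noteq> 0 \<and> A *v v = x *\<^sub>R v)" for x
  have ev: "ev x \<noteq> 0 \<and> A *v ev x = x *\<^sub>R ev x" if "x \<in> E" for x
    using that unfolding E_def real_eigenvalues_iff ev_def by (rule someI_ex)
  have orth: "inner (ev x) (ev y) = 0" if "x \<in> E" "y \<in> E" "x \<noteq> y" for x y
  proof -
    have "x * inner (ev x) (ev y) = y * inner (ev x) (ev y)"
      using selfadjoint[of "ev x" "ev y"] ev[OF \<open>x \<in> E\<close>] ev[OF \<open>y \<in> E\<close>] by simp
    then show ?thesis using \<open>x \<noteq> y\<close> by simp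
  qed
  have "inj_on ev E"
    by (rule inj_onI) (metis ev inner_eq_zero_iff orth)
  moreover have "pairwise orthogonal (ev ` E)"
    by (auto simp: pairwise_def orthogonal_def intro: orth)
  then have "independent (ev ` E)"
    by (rule pairwise_orthogonal_independent) (use ev in force)
  then have "finite (ev ` E)" by (rule independent_imp_finite)
  ultimately show ?thesis unfolding E_def[symmetric] by (rule finite_imageD[rotated])
qed

lemma linear_le_quadratic_imp_zero:
  fixes d K :: real
  assumes "\<And>t. 2 * t * d \<le> t^2 * K"
  shows "d = 0"
proof -
  define t where "t = d / (\<bar>K\<bar> + 1)"
  have "2 * (d^2 / (\<bar>K\<bar> + 1)) = 2 * t * d" by (simp add: t_def power2_eq_square)
  also have "\<dots> \<le> t^2 * K" by (rule assms)
  also have "\<dots> \<le> t^2 * (\<bar>K\<bar> + 1)" by (intro mult_left_mono) auto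
  also have "\<dots> = d^2 / (\<bar>K\<bar> + 1)" by (simp add: t_def power2_eq_square)
  finally have "d^2 / (\<bar>K\<bar> + 1) \<le> 0" by simp
  then show ?thesis using abs_ge_zero[of K] by (auto simp: divide_le_0_iff)
qed

lemma power2_norm_add_scaleR:
  fixes x y :: "'a::real_inner"
  shows "(norm (x + t *\<^sub>R y))^2 = (norm x)^2 + 2 * t * inner x y + t^2 * (norm y)^2"
  unfolding power2_norm_eq_inner inner_add_left inner_add_right inner_scaleR_left
    inner_scaleR_right inner_commute[of y x]
  by (simp only: power2_eq_square) algebra

lemma selfadjoint_max_quadratic_form_eigenvector:
  fixes A :: "complex^'n^'n"
  assumes selfadjoint: "\<And>x y. inner (A *v x) y = inner x (A *v y)"
    and unit: "norm v0 = 1"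
    and max: "\<And>v. inner v (A *v v) \<le> inner v0 (A *v v0) * (norm v)^2"
  shows "A *v v0 = inner v0 (A *v v0) *\<^sub>R v0"
proof -
  define mu where "mu = inner v0 (A *v v0)"
  define w where "w = A *v v0 - mu *\<^sub>R v0"
  (* maximality of v0 along the line v0 + t u gives 2 t <w, u> <= O(t^2) for all real t *)
  have "inner w u = 0" for u
  proof (rule linear_le_quadratic_imp_zero)
    fix t :: real
    have "inner (v0 + t *\<^sub>R u) (A *v (v0 + t *\<^sub>R u))
        = mu + 2 * t * inner (A *v v0) u + t^2 * inner u (A *v u)"
      by (simp add: mu_def matrix_vector_mult_scaleR
          selfadjoint[of v0 u] inner_commute[of u] power2_eq_square algebra_simps)
    moreover have "(norm (v0 + t *\<^sub>R u))^2 = 1 + 2 * t * inner v0 u + t^2 * (norm u)^2"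
      using unit by (simp add: power2_norm_add_scaleR)
    ultimately have "mu + 2 * t * inner (A *v v0) u + t^2 * inner u (A *v u)
        \<le> mu * (1 + 2 * t * inner v0 u + t^2 * (norm u)^2)"
      using max[of "v0 + t *\<^sub>R u"] by (simp add: mu_def)
    then show "2 * t * inner w u \<le> t^2 * (mu * (norm u)^2 - inner u (A *v u))"
      by (simp add: w_def algebra_simps)
  qed
  then have "inner w w = 0" .
  then show ?thesis by (simp add: w_def mu_def)
qed

lemma Max_real_eigenvalues_selfadjoint:
  fixes A :: "complex^'n^'n"
  assumes selfadjoint: "\<And>x y. inner (A *v x) y = inner x (A *v y)"
    and unit: "norm v0 = 1"
    and max: "\<And>v. inner v (A *v v) \<le> inner v0 (A *v v0) * (norm v)^2"
  shows "Max (real_eigenvalues A) = inner v0 (A *v v0)"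
proof (rule Max_eqI)
  show "finite (real_eigenvalues A)"
    using selfadjoint by (rule finite_real_eigenvalues_selfadjoint)
  show "inner v0 (A *v v0) \<in> real_eigenvalues A"
    unfolding real_eigenvalues_iff using unit
    by (metis selfadjoint_max_quadratic_form_eigenvector[OF assms] norm_zero zero_neq_one)
  fix x assume "x \<in> real_eigenvalues A"
  then obtain v where "v \<noteq> 0" "A *v v = x *\<^sub>R v" by (auto simp: real_eigenvalues_iff)
  then have "x * (norm v)^2 \<le> inner v0 (A *v v0) * (norm v)^2"
    using max[of v] by (simp add: power2_norm_eq_inner)
  then show "x \<le> inner v0 (A *v v0)" using \<open>v \<noteq> 0\<close> by simp
qed

lemma inner_mult_conj_transpose:
  fixes H :: "complex^'n^'m"
  shows "inner v ((H ** conj_transpose H) *v v) = (norm (conj_transpose H *v v))^2"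
  by (simp add: matrix_vector_mul_assoc[symmetric] inner_conj_transpose_mult[symmetric]
      power2_norm_eq_inner)

lemma lambda_max_variational:
  fixes H :: "complex^'n^'m"
  obtains v0 where "norm v0 = 1" "lambda_max H = (norm (conj_transpose H *v v0))^2"
    and "\<And>v. (norm (conj_transpose H *v v))^2 \<le> lambda_max H * (norm v)^2"
proof -
  define F where "F v = (norm (conj_transpose H *v v))^2" for v :: "complex^'m"
  have "continuous_on UNIV F"
    unfolding F_def matrix_vector_mult_def by (intro continuous_intros)
  then have "\<exists>x\<in>sphere 0 1. \<forall>y\<in>sphere 0 1. F y \<le> F x"
    by (intro continuous_attains_sup) (auto intro: continuous_on_subset)
  then obtain v0 where unit: "norm v0 = 1" and max_sphere: "\<And>v. norm v = 1 \<Longrightarrow> F v \<le> F v0"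
    by auto
  have max: "F v \<le> F v0 * (norm v)^2" for v
  proof (cases "v = 0")
    case False
    then have "F ((1 / norm v) *\<^sub>R v) \<le> F v0" by (intro max_sphere) simp
    with False show ?thesis by (simp add: F_def matrix_vector_mult_scaleR field_simps)
  qed (simp add: F_def)
  have "lambda_max H = F v0"
    unfolding lambda_max_def F_def inner_mult_conj_transpose[symmetric]
  proof (rule Max_real_eigenvalues_selfadjoint[OF _ unit])
    show "inner ((H ** conj_transpose H) *v x) y = inner x ((H ** conj_transpose H) *v y)" for x y
      by (metis inner_conj_transpose_mult inner_commute matrix_vector_mul_assoc)
  qed (use max in \<open>simp add: F_def inner_mult_conj_transpose\<close>)
  with unit max show thesis by (intro that) (auto simp: F_def)
qed

lemma lambda_max_nonneg: "0 \<le> lambda_max H"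
  by (metis lambda_max_variational zero_le_power2)

lemma power2_norm_vec: "(norm (x::'a::real_normed_vector^'n))^2 = (\<Sum>i\<in>UNIV. (norm (x$i))^2)"
  by (simp add: norm_vec_def L2_set_def sum_nonneg)

lemma norm_conj_transpose_mult_le:
  fixes H :: "complex^'n^'m"
  shows "norm (conj_transpose H *v v) \<le> norm H * norm v"
proof -
  have entry: "(norm ((conj_transpose H *v v) $ j))^2 \<le> (\<Sum>i\<in>UNIV. (norm (H$i$j))^2) * (norm v)^2" for j
  proof -
    have "norm ((conj_transpose H *v v) $ j) \<le> (\<Sum>i\<in>UNIV. \<bar>norm (H$i$j)\<bar> * \<bar>norm (v$i)\<bar>)"
      unfolding matrix_vector_mult_def conj_transpose_def
      by (simp add: norm_mult order_trans[OF norm_sum])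
    also have "\<dots> \<le> L2_set (\<lambda>i. norm (H$i$j)) UNIV * norm v"
      unfolding norm_vec_def by (rule L2_set_mult_ineq)
    finally have "(norm ((conj_transpose H *v v) $ j))^2 \<le> (L2_set (\<lambda>i. norm (H$i$j)) UNIV * norm v)^2"
      by (intro power_mono) simp_all
    then show ?thesis by (simp add: power_mult_distrib L2_set_def sum_nonneg)
  qed
  have "(norm (conj_transpose H *v v))^2 \<le> (\<Sum>j\<in>UNIV. (\<Sum>i\<in>UNIV. (norm (H$i$j))^2) * (norm v)^2)"
    unfolding power2_norm_vec[of "conj_transpose H *v v"] by (intro sum_mono entry)
  also have "\<dots> = (\<Sum>j\<in>UNIV. \<Sum>i\<in>UNIV. (norm (H$i$j))^2) * (norm v)^2"
    by (simp add: sum_distrib_right)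
  also have "\<dots> = (norm H * norm v)^2"
    by (subst sum.swap) (simp add: power2_norm_vec power_mult_distrib)
  finally show ?thesis by (rule power2_le_imp_le) simp
qed

lemma lambda_max_le_norm_power2: "lambda_max H \<le> (norm H)^2"
proof -
  obtain v0 where "norm v0 = 1" "lambda_max H = (norm (conj_transpose H *v v0))^2"
    by (rule lambda_max_variational)
  then show ?thesis by (metis norm_conj_transpose_mult_le mult.right_neutral norm_ge_zero power_mono)
qed

lemma norm_conj_transpose_mult_axis: "norm (conj_transpose H *v axis i 1) = norm (H$i)"
proof -
  have "conj_transpose H *v axis i 1 = (\<chi> j. cnj (H$i$j))"
    by (simp add: vec_eq_iff matrix_vector_mult_def conj_transpose_def axis_def if_distrib cong: if_cong)
  then show ?thesis by (simp add: norm_vec_def)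
qed

lemma norm_power2_le_card_lambda_max:
  fixes H :: "complex^'n^'m"
  shows "(norm H)^2 \<le> CARD('m) * lambda_max H"
proof -
  have bound: "\<And>v. (norm (conj_transpose H *v v))^2 \<le> lambda_max H * (norm v)^2"
    using lambda_max_variational[of H] by metis
  have "(norm (H$i))^2 \<le> lambda_max H" for i
    using bound[of "axis i 1"] by (simp add: norm_conj_transpose_mult_axis)
  then have "(\<Sum>i\<in>UNIV. (norm (H$i))^2) \<le> (\<Sum>i\<in>(UNIV::'m set). lambda_max H)"
    by (intro sum_mono)
  then show ?thesis by (simp add: power2_norm_vec)
qed

lemma Re_trace_mult_conj_transpose: "Re (mat_trace (H ** conj_transpose H)) = (norm H)^2"
  by (simp add: mat_trace_def matrix_matrix_mult_def conj_transpose_def complex_mult_cnj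
      power2_norm_vec flip: complex_norm_square cong: sum.cong) (simp add: cmod_power2)

lemma lambda_max_le_iff:
  "lambda_max H \<le> y \<longleftrightarrow> (\<forall>v. (norm (conj_transpose H *v v))^2 \<le> y * (norm v)^2)"
  by (metis lambda_max_variational mult.right_neutral mult_right_mono order_trans power_one zero_le_power2)

lemma borel_measurable_lambda_max:
  "lambda_max \<in> borel_measurable (borel :: (complex^'n^'m) measure)"
proof -
  have "closed {H :: complex^'n^'m. lambda_max H \<le> y}" for y
    unfolding lambda_max_le_iff conj_transpose_def matrix_vector_mult_def
    by (intro closed_Collect_all closed_Collect_le continuous_intros)
  then show ?thesis unfolding borel_measurable_iff_le by (simp add: borel_closed)
qed

definition has_power_tail :: "'a measure \<Rightarrow> ('a \<Rightarrow> real) \<Rightarrow> bool" where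
  "has_power_tail M Y \<longleftrightarrow> (\<exists>\<theta>>0. tail M Y \<in> O(\<lambda>x. x powr (- \<theta>)))"

definition has_exp_tail :: "'a measure \<Rightarrow> ('a \<Rightarrow> real) \<Rightarrow> bool" where
  "has_exp_tail M Y \<longleftrightarrow> (\<exists>\<theta>>0. tail M Y \<in> O(\<lambda>x. exp (- \<theta> * x)))"

definition has_power_moment :: "'a measure \<Rightarrow> ('a \<Rightarrow> real) \<Rightarrow> bool" where
  "has_power_moment M Y \<longleftrightarrow> (\<exists>\<theta>>0. integrable M (\<lambda>\<omega>. Y \<omega> powr \<theta>))"

lemma exp_mult_log2_eq_powr: "0 < z \<Longrightarrow> exp (t * (a * log 2 z)) = z powr (t * a / ln 2)"
  by (simp add: powr_def log_def)

context finite_measure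
begin

lemma tail_mono_AE:
  assumes [measurable]: "U \<in> borel_measurable M" "V \<in> borel_measurable M"
    and "AE \<omega> in M. U \<omega> > x \<longrightarrow> V \<omega> > y"
  shows "tail M U x \<le> tail M V y"
proof -
  have "emeasure M {\<omega>\<in>space M. U \<omega> > x} \<le> emeasure M {\<omega>\<in>space M. V \<omega> > y}"
    using assms(3) by (intro emeasure_mono_AE) auto
  then show ?thesis by (simp add: tail_def emeasure_eq_measure)
qed

lemma tail_eq_AE:
  assumes "U \<in> borel_measurable M" "V \<in> borel_measurable M"
    and "AE \<omega> in M. U \<omega> > x \<longleftrightarrow> V \<omega> > y"
  shows "tail M U x = tail M V y"
  using assms by (intro antisym tail_mono_AE) auto

lemma has_power_tail_mono:
  assumes U: "U \<in> borel_measurable M" and V: "V \<in> borel_measurable M"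
    and "k > 0" and le: "AE \<omega> in M. U \<omega> \<le> k * V \<omega>"
    and "has_power_tail M V"
  shows "has_power_tail M U"
proof -
  obtain \<theta> where "\<theta> > 0" and V_tail: "tail M V \<in> O(\<lambda>x. x powr (- \<theta>))"
    using \<open>has_power_tail M V\<close> by (auto simp: has_power_tail_def)
  have "tail M U x \<le> tail M V (x / k)" for x
    using le \<open>k > 0\<close> by (intro tail_mono_AE[OF U V]) (auto simp: divide_less_eq mult.commute)
  then have "tail M U \<in> O(\<lambda>x. tail M V (x / k))"
    by (intro landau_o.big_mono always_eventually) (simp add: tail_def)
  also have "(\<lambda>x. tail M V (x / k)) \<in> O(\<lambda>x. (x / k) powr (- \<theta>))"
    by (rule landau_o.big.compose[OF V_tail]) (use \<open>k > 0\<close> in real_asymp)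
  also have "(\<lambda>x. (x / k) powr (- \<theta>)) \<in> O(\<lambda>x. x powr (- \<theta>))"
    using \<open>k > 0\<close> by real_asymp
  finally show ?thesis using \<open>\<theta> > 0\<close> by (auto simp: has_power_tail_def)
qed

lemma tail_log_eq:
  assumes [measurable]: "X \<in> borel_measurable M"
    and nonneg: "AE \<omega> in M. 0 \<le> X \<omega>" and "a > 0" "b > 0"
  shows "tail M (\<lambda>\<omega>. a * log 2 (1 + b * X \<omega>)) x = tail M X ((2 powr (x / a) - 1) / b)"
proof (rule tail_eq_AE)
  show "AE \<omega> in M. x < a * log 2 (1 + b * X \<omega>) \<longleftrightarrow> (2 powr (x / a) - 1) / b < X \<omega>"
    using nonneg
  proof eventually_elim
    case (elim \<omega>)
    then have "0 < 1 + b * X \<omega>" using \<open>b > 0\<close> by (simp add: add_pos_nonneg)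
    have "x < a * log 2 (1 + b * X \<omega>) \<longleftrightarrow> x / a < log 2 (1 + b * X \<omega>)"
      using \<open>a > 0\<close> by (simp add: pos_divide_less_eq mult.commute)
    also have "\<dots> \<longleftrightarrow> 2 powr (x / a) < 1 + b * X \<omega>"
      using \<open>0 < 1 + b * X \<omega>\<close> by (simp add: less_log_iff)
    also have "\<dots> \<longleftrightarrow> (2 powr (x / a) - 1) / b < X \<omega>"
      using \<open>b > 0\<close> by (auto simp: divide_less_eq mult.commute)
    finally show ?case .
  qed
qed measurable

lemma has_exp_tail_log_iff:
  assumes X: "X \<in> borel_measurable M"
    and nonneg: "AE \<omega> in M. 0 \<le> X \<omega>" and "a > 0" "b > 0"
  shows "has_exp_tail M (\<lambda>\<omega>. a * log 2 (1 + b * X \<omega>)) \<longleftrightarrow> has_power_tail M X"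
    (is "has_exp_tail M ?C \<longleftrightarrow> _")
proof
  assume "has_exp_tail M ?C"
  then obtain \<theta> where "\<theta> > 0" and C_tail: "tail M ?C \<in> O(\<lambda>x. exp (- \<theta> * x))"
    by (auto simp: has_exp_tail_def)
  define \<theta>' where "\<theta>' = \<theta> * a / ln 2"
  have "\<theta>' > 0" using \<open>\<theta> > 0\<close> \<open>a > 0\<close> by (simp add: \<theta>'_def)
  have "tail M X y = tail M ?C (a * log 2 (1 + b * y))" if "y \<ge> 0" for y
  proof -
    have "0 < 1 + b * y" using \<open>b > 0\<close> \<open>y \<ge> 0\<close> by (simp add: add_pos_nonneg)
    then show ?thesis using \<open>a > 0\<close> \<open>b > 0\<close> by (simp add: tail_log_eq[OF X nonneg])
  qed
  then have "tail M X \<in> \<Theta>(\<lambda>y. tail M ?C (a * log 2 (1 + b * y)))"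
    by (intro bigthetaI_cong eventually_mono[OF eventually_ge_at_top[of 0]]) simp
  also have "(\<lambda>y. tail M ?C (a * log 2 (1 + b * y))) \<in> O(\<lambda>y. exp (- \<theta> * (a * log 2 (1 + b * y))))"
    by (rule landau_o.big.compose[OF C_tail]) (use \<open>a > 0\<close> \<open>b > 0\<close> in real_asymp)
  also have "(\<lambda>y. exp (- \<theta> * (a * log 2 (1 + b * y)))) \<in> \<Theta>(\<lambda>y. (1 + b * y) powr (- \<theta>'))"
  proof (intro bigthetaI_cong eventually_mono[OF eventually_ge_at_top[of 0]])
    fix y :: real assume "y \<ge> 0"
    then show "exp (- \<theta> * (a * log 2 (1 + b * y))) = (1 + b * y) powr (- \<theta>')"
      using exp_mult_log2_eq_powr[of "1 + b * y" "- \<theta>" a] \<open>b > 0\<close> by (simp add: \<theta>'_def add_pos_nonneg)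
  qed
  also have "(\<lambda>y. (1 + b * y) powr (- \<theta>')) \<in> O(\<lambda>y. y powr (- \<theta>'))"
    using \<open>b > 0\<close> by real_asymp
  finally show "has_power_tail M X"
    using \<open>\<theta>' > 0\<close> unfolding has_power_tail_def by blast
next
  assume "has_power_tail M X"
  then obtain \<theta> where "\<theta> > 0" and X_tail: "tail M X \<in> O(\<lambda>x. x powr (- \<theta>))"
    by (auto simp: has_power_tail_def)
  define \<theta>' where "\<theta>' = \<theta> * ln 2 / a"
  have "\<theta>' > 0" using \<open>\<theta> > 0\<close> \<open>a > 0\<close> by (simp add: \<theta>'_def)
  have "tail M ?C = (\<lambda>x. tail M X ((2 powr (x / a) - 1) / b))"
    using tail_log_eq[OF X nonneg \<open>a > 0\<close> \<open>b > 0\<close>] by (rule ext)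
  also have "\<dots> \<in> O(\<lambda>x. ((2 powr (x / a) - 1) / b) powr (- \<theta>))"
    by (rule landau_o.big.compose[OF X_tail]) (use \<open>a > 0\<close> \<open>b > 0\<close> in real_asymp)
  also have "(\<lambda>x. ((2 powr (x / a) - 1) / b) powr (- \<theta>)) \<in> O(\<lambda>x. exp (- \<theta>' * x))"
    unfolding \<theta>'_def using \<open>a > 0\<close> \<open>b > 0\<close> \<open>\<theta> > 0\<close> by real_asymp
  finally show "has_exp_tail M ?C"
    using \<open>\<theta>' > 0\<close> unfolding has_exp_tail_def by blast
qed

end

lemma powr_one_plus_le:
  fixes x \<theta> :: real
  assumes "0 \<le> x" "0 \<le> \<theta>"
  shows "(1 + x) powr \<theta> \<le> 2 powr \<theta> * (1 + x powr \<theta>)"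
proof -
  have "(1 + x) powr \<theta> \<le> (2 * max 1 x) powr \<theta>"
    using assms by (intro powr_mono2) auto
  also have "\<dots> = 2 powr \<theta> * max 1 x powr \<theta>"
    by (simp add: powr_mult)
  also have "\<dots> \<le> 2 powr \<theta> * (1 + x powr \<theta>)"
    by (intro mult_left_mono) (auto simp: max_def)
  finally show ?thesis .
qed

lemma has_power_moment_mono:
  assumes le: "AE \<omega> in M. 0 \<le> U \<omega> \<and> U \<omega> \<le> k * V \<omega>" and "has_power_moment M V"
    and [measurable]: "U \<in> borel_measurable M"
  shows "has_power_moment M U"
proof -
  obtain \<theta> where "\<theta> > 0" and V_int: "integrable M (\<lambda>\<omega>. V \<omega> powr \<theta>)"
    using \<open>has_power_moment M V\<close> by (auto simp: has_power_moment_def)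
  have "integrable M (\<lambda>\<omega>. U \<omega> powr \<theta>)"
  proof (rule Bochner_Integration.integrable_bound)
    show "integrable M (\<lambda>\<omega>. k powr \<theta> * V \<omega> powr \<theta>)" using V_int by simp
    show "AE \<omega> in M. norm (U \<omega> powr \<theta>) \<le> norm (k powr \<theta> * V \<omega> powr \<theta>)"
      using le
    proof eventually_elim
      case (elim \<omega>)
      then have "U \<omega> powr \<theta> \<le> (k * V \<omega>) powr \<theta>" using \<open>\<theta> > 0\<close> by (intro powr_mono2) auto
      then show ?case by (simp add: powr_mult)
    qed
  qed measurable
  then show ?thesis using \<open>\<theta> > 0\<close> by (auto simp: has_power_moment_def)
qed

lemma has_power_moment_exp_log2_iff:
  assumes [measurable]: "Y \<in> borel_measurable M"
    and pos: "AE \<omega> in M. 0 < Y \<omega>" and "a > 0"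
  shows "(\<exists>\<theta>>0. integrable M (\<lambda>\<omega>. exp (\<theta> * (a * log 2 (Y \<omega>))))) \<longleftrightarrow> has_power_moment M Y"
proof -
  have "integrable M (\<lambda>\<omega>. exp (t * (a * log 2 (Y \<omega>))))
      \<longleftrightarrow> integrable M (\<lambda>\<omega>. Y \<omega> powr (t * a / ln 2))" for t
    using pos by (intro integrable_cong_AE) (auto simp: exp_mult_log2_eq_powr)
  moreover have "(\<exists>t>0. P (t * a / ln 2)) \<longleftrightarrow> (\<exists>\<theta>>0. P \<theta>)" for P
  proof
    assume "\<exists>\<theta>>0. P \<theta>"
    then obtain \<theta> where "\<theta> > 0" "P \<theta>" by blast
    then show "\<exists>t>0. P (t * a / ln 2)"
      using \<open>a > 0\<close> by (intro exI[of _ "\<theta> * ln 2 / a"]) auto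
  next
    assume "\<exists>t>0. P (t * a / ln 2)"
    then obtain t where "t > 0" "P (t * a / ln 2)" by blast
    then show "\<exists>\<theta>>0. P \<theta>"
      using \<open>a > 0\<close> by (intro exI[of _ "t * a / ln 2"]) auto
  qed
  ultimately show ?thesis by (simp add: has_power_moment_def)
qed

context prob_space
begin

lemma has_power_moment_one_plus:
  assumes [measurable]: "X \<in> borel_measurable M"
    and nonneg: "AE \<omega> in M. 0 \<le> X \<omega>" and "has_power_moment M X"
  shows "has_power_moment M (\<lambda>\<omega>. 1 + X \<omega>)"
proof -
  obtain \<theta> where "\<theta> > 0" and X_int: "integrable M (\<lambda>\<omega>. X \<omega> powr \<theta>)"
    using \<open>has_power_moment M X\<close> by (auto simp: has_power_moment_def)
  have "integrable M (\<lambda>\<omega>. (1 + X \<omega>) powr \<theta>)"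
  proof (rule Bochner_Integration.integrable_bound)
    show "integrable M (\<lambda>\<omega>. 2 powr \<theta> * (1 + X \<omega> powr \<theta>))" using X_int by simp
    show "AE \<omega> in M. norm ((1 + X \<omega>) powr \<theta>) \<le> norm (2 powr \<theta> * (1 + X \<omega> powr \<theta>))"
      using nonneg by eventually_elim (use \<open>\<theta> > 0\<close> powr_one_plus_le in auto)
  qed measurable
  then show ?thesis using \<open>\<theta> > 0\<close> by (auto simp: has_power_moment_def)
qed

lemma has_power_moment_one_plus_iff:
  assumes [measurable]: "X \<in> borel_measurable M"
    and nonneg: "AE \<omega> in M. 0 \<le> X \<omega>" and "b > 0"
  shows "has_power_moment M (\<lambda>\<omega>. 1 + b * X \<omega>) \<longleftrightarrow> has_power_moment M X"
proof
  have "AE \<omega> in M. 0 \<le> X \<omega> \<and> X \<omega> \<le> 1 / b * (1 + b * X \<omega>)"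
    using nonneg by eventually_elim (use \<open>b > 0\<close> in \<open>simp add: field_simps\<close>)
  moreover assume "has_power_moment M (\<lambda>\<omega>. 1 + b * X \<omega>)"
  ultimately show "has_power_moment M X"
    by (rule has_power_moment_mono) measurable
next
  have "AE \<omega> in M. 0 \<le> 1 + b * X \<omega> \<and> 1 + b * X \<omega> \<le> max 1 b * (1 + X \<omega>)"
    using nonneg
  proof eventually_elim
    case (elim \<omega>)
    have "b * X \<omega> \<le> max 1 b * X \<omega>" using elim by (intro mult_right_mono) auto
    then show ?case using elim \<open>b > 0\<close> by (simp add: distrib_left)
  qed
  moreover assume "has_power_moment M X"
  then have "has_power_moment M (\<lambda>\<omega>. 1 + X \<omega>)" by (rule has_power_moment_one_plus[OF assms(1) nonneg])
  ultimately show "has_power_moment M (\<lambda>\<omega>. 1 + b * X \<omega>)"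
    by (rule has_power_moment_mono) measurable
qed

lemma indep_var_nn_integral:
  fixes X Y :: "'a \<Rightarrow> ennreal"
  assumes "indep_var borel X borel Y"
  shows "(\<integral>\<^sup>+\<omega>. X \<omega> * Y \<omega> \<partial>M) = (\<integral>\<^sup>+\<omega>. X \<omega> \<partial>M) * (\<integral>\<^sup>+\<omega>. Y \<omega> \<partial>M)"
proof -
  have "case_bool borel borel = (\<lambda>_::bool. borel :: ennreal measure)"
    by (auto split: bool.split)
  then have "indep_vars (\<lambda>_. borel) (case_bool X Y) UNIV"
    using assms by (simp add: indep_var_def)
  then have "(\<integral>\<^sup>+\<omega>. (\<Prod>i\<in>UNIV. case_bool X Y i \<omega>) \<partial>M) = (\<Prod>i\<in>UNIV. \<integral>\<^sup>+\<omega>. case_bool X Y i \<omega> \<partial>M)"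
    by (intro indep_vars_nn_integral) auto
  then show ?thesis by (simp add: UNIV_bool mult.commute)
qed

lemma nn_integral_powr_mult_indep:
  fixes X Y :: "'a \<Rightarrow> real"
  assumes "indep_var borel X borel Y"
  shows "(\<integral>\<^sup>+\<omega>. ennreal ((X \<omega> * Y \<omega>) powr \<theta>) \<partial>M)
    = (\<integral>\<^sup>+\<omega>. ennreal (X \<omega> powr \<theta>) \<partial>M) * (\<integral>\<^sup>+\<omega>. ennreal (Y \<omega> powr \<theta>) \<partial>M)"
proof -
  have "(\<lambda>x. ennreal (x powr \<theta>)) \<in> borel_measurable borel" by measurable
  then have "indep_var borel (\<lambda>\<omega>. ennreal (X \<omega> powr \<theta>)) borel (\<lambda>\<omega>. ennreal (Y \<omega> powr \<theta>))"
    using indep_var_compose[OF assms] unfolding comp_def by blast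
  then have "(\<integral>\<^sup>+\<omega>. ennreal (X \<omega> powr \<theta>) * ennreal (Y \<omega> powr \<theta>) \<partial>M)
    = (\<integral>\<^sup>+\<omega>. ennreal (X \<omega> powr \<theta>) \<partial>M) * (\<integral>\<^sup>+\<omega>. ennreal (Y \<omega> powr \<theta>) \<partial>M)"
    by (rule indep_var_nn_integral)
  then show ?thesis by (simp add: powr_mult ennreal_mult)
qed

(* x powr 1 = |x| for real x, so the exponent 1 works *)
lemma has_power_moment_mult_indep:
  assumes "indep_var borel X borel Y" "integrable M X" "integrable M Y"
  shows "has_power_moment M (\<lambda>\<omega>. X \<omega> * Y \<omega>)"
  unfolding has_power_moment_def
  using indep_var_integrable[OF assms] by (intro exI[of _ 1]) simp

end

theorem lemma2:
  fixes M :: "'a measure"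
    and H :: "'a \<Rightarrow> complex^'nt^'nr"
    and p :: "'a \<Rightarrow> real"
    and a b :: real
  assumes "prob_space M"
    and "H \<in> borel_measurable M"
    and "p \<in> borel_measurable M"
    and "AE \<omega> in M. p \<omega> \<ge> 0"
    and "a > 0" and "b > 0"
  defines "lam \<equiv> (\<lambda>\<omega>. lambda_max (H \<omega>))"
    and "c \<equiv> (\<lambda>\<omega>. a * log 2 (1 + b * p \<omega> * lambda_max (H \<omega>)))"
  shows
    "(((\<exists>\<theta>>0. tail M c \<in> O(\<lambda>x. exp (- \<theta> * x)))
        \<longleftrightarrow> (\<exists>\<theta>>0. tail M (\<lambda>\<omega>. p \<omega> * lam \<omega>) \<in> O(\<lambda>x. x powr (- \<theta>))))
     \<and> ((\<exists>\<theta>>0. tail M (\<lambda>\<omega>. p \<omega> * lam \<omega>) \<in> O(\<lambda>x. x powr (- \<theta>)))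
        \<longleftrightarrow> (\<exists>\<theta>>0. tail M (\<lambda>\<omega>. p \<omega> * Re (mat_trace (H \<omega> ** conj_transpose (H \<omega>))))
                        \<in> O(\<lambda>x. x powr (- \<theta>)))))
   \<and> ( ((\<exists>\<theta>>0. integrable M (\<lambda>\<omega>. (1 + b * p \<omega> * lam \<omega>) powr \<theta>))
        \<longleftrightarrow> (\<exists>\<theta>>0. integrable M (\<lambda>\<omega>. exp (\<theta> * c \<omega>))))
     \<and> ((\<exists>\<theta>>0. integrable M (\<lambda>\<omega>. (1 + b * p \<omega> * lam \<omega>) powr \<theta>))
        \<longleftrightarrow> (\<exists>\<theta>>0. integrable M (\<lambda>\<omega>. (1 + p \<omega> * lam \<omega>) powr \<theta>)))
     \<and> ((\<exists>\<theta>>0. integrable M (\<lambda>\<omega>. (1 + p \<omega> * lam \<omega>) powr \<theta>))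
        \<longleftrightarrow> (\<exists>\<theta>>0. integrable M (\<lambda>\<omega>. (p \<omega> * lam \<omega>) powr \<theta>))))
   \<and> (prob_space.indep_var M borel p borel lam \<longrightarrow>
       (\<forall>\<theta>>0. (\<integral>\<^sup>+\<omega>. ennreal ((p \<omega> * lam \<omega>) powr \<theta>) \<partial>M)
              = (\<integral>\<^sup>+\<omega>. ennreal (p \<omega> powr \<theta>) \<partial>M) * (\<integral>\<^sup>+\<omega>. ennreal (lam \<omega> powr \<theta>) \<partial>M))
       \<and> (integrable M p \<and> integrable M lam \<longrightarrow>
            (\<exists>\<theta>>0. integrable M (\<lambda>\<omega>. (p \<omega> * lam \<omega>) powr \<theta>))))"
proof -
  interpret prob_space M by fact
  note [measurable] = assms(2,3)
  have [measurable]: "lam \<in> borel_measurable M"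
    unfolding lam_def by (rule measurable_compose[OF assms(2) borel_measurable_lambda_max])
  define X where "X = (\<lambda>\<omega>. p \<omega> * lam \<omega>)"
  define T where "T = (\<lambda>\<omega>. p \<omega> * Re (mat_trace (H \<omega> ** conj_transpose (H \<omega>))))"
  have T_eq: "T = (\<lambda>\<omega>. p \<omega> * (norm (H \<omega>))^2)"
    by (simp add: T_def Re_trace_mult_conj_transpose)
  have X_meas [measurable]: "X \<in> borel_measurable M" and T_meas: "T \<in> borel_measurable M"
    unfolding X_def T_eq by measurable
  have X_nonneg: "AE \<omega> in M. 0 \<le> X \<omega>"
    using assms(4) by eventually_elim (simp add: X_def lam_def lambda_max_nonneg)
  have X_le_T: "AE \<omega> in M. X \<omega> \<le> 1 * T \<omega>"
    using assms(4) by eventually_elim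
      (simp add: X_def T_eq lam_def mult_left_mono lambda_max_le_norm_power2)
  have T_le_X: "AE \<omega> in M. T \<omega> \<le> CARD('nr) * X \<omega>"
    using assms(4) by eventually_elim
      (simp add: X_def T_eq lam_def mult.left_commute mult_left_mono norm_power2_le_card_lambda_max)
  have tail_X_T: "has_power_tail M X \<longleftrightarrow> has_power_tail M T"
    using has_power_tail_mono[OF X_meas T_meas zero_less_one X_le_T]
      has_power_tail_mono[OF T_meas X_meas _ T_le_X] by auto
  have tail_c_X: "has_exp_tail M c \<longleftrightarrow> has_power_tail M X"
    using has_exp_tail_log_iff[OF X_meas X_nonneg \<open>a > 0\<close> \<open>b > 0\<close>]
    by (simp add: c_def X_def lam_def mult.assoc)
  have pos: "AE \<omega> in M. 0 < 1 + b * p \<omega> * lam \<omega>"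
    using X_nonneg by eventually_elim (use \<open>b > 0\<close> in \<open>simp add: X_def mult.assoc add_pos_nonneg\<close>)
  have "c = (\<lambda>\<omega>. a * log 2 (1 + b * p \<omega> * lam \<omega>))"
    by (simp add: c_def lam_def)
  then have moment_c: "(\<exists>\<theta>>0. integrable M (\<lambda>\<omega>. exp (\<theta> * c \<omega>)))
      \<longleftrightarrow> has_power_moment M (\<lambda>\<omega>. 1 + b * p \<omega> * lam \<omega>)"
    using has_power_moment_exp_log2_iff[OF _ pos \<open>a > 0\<close>] by simp
  have moment_b: "has_power_moment M (\<lambda>\<omega>. 1 + b * p \<omega> * lam \<omega>) \<longleftrightarrow> has_power_moment M X"
    using has_power_moment_one_plus_iff[OF X_meas X_nonneg \<open>b > 0\<close>] by (simp add: X_def mult.assoc)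
  have moment_1: "has_power_moment M (\<lambda>\<omega>. 1 + p \<omega> * lam \<omega>) \<longleftrightarrow> has_power_moment M X"
    using has_power_moment_one_plus_iff[OF X_meas X_nonneg zero_less_one] by (simp add: X_def)
  have indep: "(\<forall>\<theta>>0. (\<integral>\<^sup>+\<omega>. ennreal ((p \<omega> * lam \<omega>) powr \<theta>) \<partial>M)
        = (\<integral>\<^sup>+\<omega>. ennreal (p \<omega> powr \<theta>) \<partial>M) * (\<integral>\<^sup>+\<omega>. ennreal (lam \<omega> powr \<theta>) \<partial>M))
      \<and> (integrable M p \<and> integrable M lam \<longrightarrow> has_power_moment M X)"
    if "indep_var borel p borel lam"
    using nn_integral_powr_mult_indep[OF that] has_power_moment_mult_indep[OF that]
    by (simp add: X_def)
  show ?thesis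
    unfolding has_power_tail_def[symmetric] has_exp_tail_def[symmetric]
      has_power_moment_def[symmetric] X_def[symmetric] T_def[symmetric]
    using tail_X_T tail_c_X moment_c moment_b moment_1 indep by blast
qed

end
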